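(* Let $\alpha,\beta,\omega,\rho,\kappa\in\mathbb{C}$ satisfy $$\mathrm{Re}(\alpha)>0,\quad \mathrm{Re}(\beta)>0,\quad \mathrm{Re}(\kappa)>0,\quad \mathrm{Re}(\kappa-\alpha)<1.$$ Then for any interval $(c,d)\subset\mathbb{R}$ and any function $f\in L^1(c,d)$, the generalised Prabhakar operator can be written as $$\mathcal{E}_{\alpha,\beta;c+}^{\omega,\rho,\kappa}f(x)=\sum_{n=0}^{\infty}\frac{\Gamma(\rho+\kappa n)\,\omega^n}{\Gamma(\rho)\,n!}\,{}^{RL}I_{c+}^{\alpha n+\beta}f(x),$$ where the series on the right-hand side is locally uniformly convergent.
   Context: For $\mathrm{Re}(\gamma)>0$, the Riemann--Liouville fractional integral is ${}^{RL}I_{c+}^{\gamma}f(x)=\frac{1}{\Gamma(\gamma)}\int_c^x (x-t)^{\gamma-1}f(t)\,\mathrm{d}t$. The generalised (four-parameter) Mittag-Leffler function is $$E_{\alpha,\beta}^{\rho,\kappa}(z)=\sum_{n=0}^{\infty}\frac{\Gamma(\rho+\kappa n)\,z^n}{\Gamma(\rho)\,\Gamma(\alpha n+\beta)\,n!},$$ where $\Gamma(\rho+\kappa n)/\Gamma(\rho)$ is the generalised Pochhammer symbol $(\rho)_{\kappa n}$. The generalised Prabhakar fractional integral is $$\mathcal{E}_{\alpha,\beta;c+}^{\omega,\rho,\kappa}f(x)=\int_c^x (x-t)^{\beta-1}E_{\alpha,\beta}^{\rho,\kappa}\big[\omega (x-t)^{\alpha}\big]f(t)\,\mathrm{d}t.$$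 *)

theory Defs
  imports "HOL-Analysis.Analysis"
begin

text \<open>Generalised (four-parameter) Mittag-Leffler function.
  Division by a Gamma value at a pole yields 0 (Isabelle's convention x/0 = 0),
  which agrees with the reciprocal-Gamma convention.\<close>
definition ML4 :: "complex \<Rightarrow> complex \<Rightarrow> complex \<Rightarrow> complex \<Rightarrow> complex \<Rightarrow> complex" where
  "ML4 \<alpha> \<beta> \<rho> \<kappa> z =
     (\<Sum>n. Gamma (\<rho> + \<kappa> * of_nat n) * z ^ n /
            (Gamma \<rho> * Gamma (\<alpha> * of_nat n + \<beta>) * fact n))"

definition RL_int :: "real \<Rightarrow> complex \<Rightarrow> (real \<Rightarrow> complex) \<Rightarrow> real \<Rightarrow> complex" where
  "RL_int c \<gamma> f x =
     (1 / Gamma \<gamma>) * (LINT t:{c<..<x}|lebesgue. of_real (x - t) powr (\<gamma> - 1) * f t)"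

definition prab_kernel ::
  "complex \<Rightarrow> complex \<Rightarrow> complex \<Rightarrow> complex \<Rightarrow> complex \<Rightarrow> real \<Rightarrow> complex" where
  "prab_kernel \<alpha> \<beta> \<omega> \<rho> \<kappa> s =
     of_real s powr (\<beta> - 1) * ML4 \<alpha> \<beta> \<rho> \<kappa> (\<omega> * of_real s powr \<alpha>)"

definition prab_int ::
  "complex \<Rightarrow> complex \<Rightarrow> complex \<Rightarrow> complex \<Rightarrow> complex \<Rightarrow> real \<Rightarrow> (real \<Rightarrow> complex) \<Rightarrow> real \<Rightarrow> complex" where
  "prab_int \<alpha> \<beta> \<omega> \<rho> \<kappa> c f x =
     (LINT t:{c<..<x}|lebesgue. prab_kernel \<alpha> \<beta> \<omega> \<rho> \<kappa> (x - t) * f t)"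

end

theory Submission
  imports Defs "HOL-Real_Asymp.Real_Asymp"
begin

(* The Mittag-Leffler series converges absolutely for every argument: by crude Stirling-type
   bounds, |Gamma(rho + kappa n)| R^n / (|Gamma(alpha n + beta)| n!) is
   exp((Re kappa - Re alpha - 1) n ln n + O(n)), which decays faster than any geometric
   sequence because Re(kappa - alpha) < 1.  For c < t < x the n-th term of the kernel series
   times f t is therefore dominated by C_n M^n (x - t)^(Re beta - 1) |f t| with summable
   C_n M^n, and termwise integration is justified by dominated convergence as soon as
   (x - t)^(Re beta - 1) |f t| is integrable on (c, x); by Tonelli this holds for almost
   every x.  Once Re(alpha n + beta) >= 1, the n-th Riemann-Liouville integral is bounded by
   (d - c)^(Re(alpha n + beta) - 1) ||f||_1 / |Gamma(alpha n + beta)| uniformly in x, and the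
   Weierstrass M-test gives uniform convergence on (c, d). *)

section \<open>Bounds for the Gamma function\<close>

lemma norm_Gamma_series:
  fixes z :: complex
  shows "norm (Gamma_series z n) = fact n * exp (Re z * ln (real n)) / (\<Prod>k<n+1. norm (z + of_nat k))"
proof -
  have "norm (pochhammer z (n+1)) = (\<Prod>k<n+1. norm (z + of_nat k))"
    by (simp add: pochhammer_prod prod_norm atLeast0LessThan)
  moreover have "norm (exp (z * of_real (ln (of_nat n)))) = exp (Re z * ln (real n))"
    by (simp add: norm_exp_eq_Re)
  ultimately show ?thesis
    by (simp add: Gamma_series_def norm_divide norm_mult)
qed

lemma Gamma_series_real:
  fixes x :: real
  shows "Gamma_series x n = fact n * exp (x * ln (real n)) / (\<Prod>k<n+1. x + of_nat k)"
  by (simp add: Gamma_series_def pochhammer_prod atLeast0LessThan)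

lemma norm_Gamma_le_Gamma_Re:
  fixes z :: complex
  assumes "Re z > 0"
  shows "norm (Gamma z) \<le> Gamma (Re z)"
proof -
  have "norm (Gamma_series z n) \<le> Gamma_series (Re z) n" for n
  proof -
    have le: "(\<Prod>k<n+1. Re z + of_nat k) \<le> (\<Prod>k<n+1. norm (z + of_nat k))"
      using assms complex_Re_le_cmod[of "z + of_nat _"] by (intro prod_mono) auto
    have pos: "0 < (\<Prod>k<n+1. Re z + of_nat k)"
      using assms by (intro prod_pos) (auto simp: add_pos_nonneg)
    show ?thesis unfolding norm_Gamma_series Gamma_series_real
      using le pos by (intro divide_left_mono mult_pos_pos) auto
  qed
  then show ?thesis
    by (intro tendsto_le[OF _ Gamma_series_LIMSEQ tendsto_norm[OF Gamma_series_LIMSEQ]]) auto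
qed

lemma norm_le_Re_mult_exp:
  fixes w :: complex
  assumes "Re w > 0"
  shows "norm w \<le> Re w * exp ((Im w)\<^sup>2 / (Re w)\<^sup>2 / 2)"
proof -
  have "(Re w)\<^sup>2 + (Im w)\<^sup>2 = (Re w)\<^sup>2 * (1 + (Im w)\<^sup>2 / (Re w)\<^sup>2)"
    using assms by (simp add: field_simps)
  also have "\<dots> \<le> (Re w)\<^sup>2 * exp ((Im w)\<^sup>2 / (Re w)\<^sup>2)"
    by (intro mult_left_mono exp_ge_add_one_self) auto
  also have "\<dots> = (Re w * exp ((Im w)\<^sup>2 / (Re w)\<^sup>2 / 2))\<^sup>2"
    by (simp add: power_mult_distrib power2_eq_square exp_add[symmetric])
  finally show ?thesis
    using assms unfolding cmod_def by (intro real_le_lsqrt) auto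
qed

lemma sum_inverse_square_le:
  fixes x :: real
  assumes "x > 0"
  shows "(\<Sum>k<Suc m. 1 / (x + of_nat k)\<^sup>2) \<le> 1 / x\<^sup>2 + 1 / x - 1 / (x + of_nat m)"
proof (induction m)
  case (Suc m)
  define a where "a = x + of_nat m"
  have a: "a > 0"
    using assms by (simp add: a_def)
  have "1 / (a + 1)\<^sup>2 \<le> 1 / (a * (a + 1))"
    using a by (intro divide_left_mono) (auto simp: power2_eq_square)
  also have "\<dots> = 1 / a - 1 / (a + 1)"
    using a by (simp add: field_simps)
  finally have "1 / (a + 1)\<^sup>2 \<le> 1 / a - 1 / (a + 1)" .
  moreover have "x + of_nat (Suc m) = a + 1"
    by (simp add: a_def)
  ultimately have "1 / (x + of_nat (Suc m))\<^sup>2 \<le> 1 / (x + of_nat m) - 1 / (x + of_nat (Suc m))"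
    by (simp only: a_def)
  with Suc show ?case
    by simp
qed simp

lemma prod_norm_le_prod_Re_mult_exp:
  fixes z :: complex
  assumes "Re z > 0"
  shows "(\<Prod>k<n+1. norm (z + of_nat k))
           \<le> (\<Prod>k<n+1. Re z + of_nat k) * exp ((Im z)\<^sup>2 * (1 / (Re z)\<^sup>2 + 1 / Re z) / 2)"
proof -
  define x where "x = Re z"
  define y where "y = Im z"
  have x: "x > 0"
    using assms by (simp add: x_def)
  have "(\<Prod>k<n+1. norm (z + of_nat k)) \<le> (\<Prod>k<n+1. (x + of_nat k) * exp (y\<^sup>2 / (x + of_nat k)\<^sup>2 / 2))"
    using norm_le_Re_mult_exp[of "z + of_nat _"] x by (intro prod_mono) (auto simp: x_def y_def)
  also have "\<dots> = (\<Prod>k<n+1. x + of_nat k) * exp (y\<^sup>2 / 2 * (\<Sum>k<n+1. 1 / (x + of_nat k)\<^sup>2))"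
  proof -
    have "(\<Prod>k<n+1. exp (y\<^sup>2 / (x + of_nat k)\<^sup>2 / 2)) = exp (\<Sum>k<n+1. y\<^sup>2 / (x + of_nat k)\<^sup>2 / 2)"
      by (rule exp_sum[symmetric]) simp
    also have "(\<Sum>k<n+1. y\<^sup>2 / (x + of_nat k)\<^sup>2 / 2) = y\<^sup>2 / 2 * (\<Sum>k<n+1. 1 / (x + of_nat k)\<^sup>2)"
      by (subst sum_distrib_left) (intro sum.cong refl, simp)
    finally show ?thesis
      by (simp only: prod.distrib)
  qed
  also have "\<dots> \<le> (\<Prod>k<n+1. x + of_nat k) * exp (y\<^sup>2 * (1 / x\<^sup>2 + 1 / x) / 2)"
  proof -
    have "0 \<le> 1 / (x + of_nat n)"
      using x by simp
    then have "(\<Sum>k<n+1. 1 / (x + of_nat k)\<^sup>2) \<le> 1 / x\<^sup>2 + 1 / x"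
      using sum_inverse_square_le[OF x, of n] by (simp only: Suc_eq_plus1)
    then show ?thesis
      using x by (intro mult_left_mono prod_nonneg) (auto intro: mult_left_mono)
  qed
  finally show ?thesis
    by (simp add: x_def y_def)
qed

lemma Gamma_Re_le_norm_Gamma:
  fixes z :: complex
  assumes "Re z > 0"
  shows "Gamma (Re z) \<le> norm (Gamma z) * exp ((Im z)\<^sup>2 * (1 / (Re z)\<^sup>2 + 1 / Re z) / 2)"
proof -
  define E where "E = exp ((Im z)\<^sup>2 * (1 / (Re z)\<^sup>2 + 1 / Re z) / 2)"
  have "Gamma_series (Re z) n \<le> norm (Gamma_series z n) * E" for n
  proof -
    define F where "F = fact n * exp (Re z * ln (real n))"
    have "0 < norm (z + of_nat k)" for k
      by (rule less_le_trans[OF _ complex_Re_le_cmod]) (use assms in \<open>simp add: add_pos_nonneg\<close>)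
    then have pos: "0 < (\<Prod>k<n+1. norm (z + of_nat k))"
      by (intro prod_pos) auto
    have "Gamma_series (Re z) n = F * E / ((\<Prod>k<n+1. Re z + of_nat k) * E)"
      by (simp add: Gamma_series_real F_def E_def)
    also have "\<dots> \<le> F * E / (\<Prod>k<n+1. norm (z + of_nat k))"
      using prod_norm_le_prod_Re_mult_exp[OF assms, of n] pos
      by (intro divide_left_mono) (auto simp: F_def E_def)
    also have "\<dots> = norm (Gamma_series z n) * E"
      by (simp add: norm_Gamma_series F_def)
    finally show ?thesis .
  qed
  then show ?thesis
    unfolding E_def[symmetric]
    by (intro tendsto_le[OF _ tendsto_mult_right[OF tendsto_norm[OF Gamma_series_LIMSEQ]]
          Gamma_series_LIMSEQ]) auto
qed

lemma pow_div_fact_le_exp: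
  fixes x :: real
  assumes "0 \<le> x"
  shows "x ^ n / fact n \<le> exp x"
proof -
  have "(\<Sum>k\<in>{n}. x ^ k /\<^sub>R fact k) \<le> (\<Sum>k. x ^ k /\<^sub>R fact k)"
    using assms by (intro sum_le_suminf summable_exp_generic) auto
  then show ?thesis
    by (simp add: exp_def divide_inverse mult.commute)
qed

lemma ln_fact_ge: "real k * (ln (real k) - 1) \<le> ln (fact k)"
proof (cases "k = 0")
  case False
  have "real k ^ k \<le> exp (real k) * fact k"
    using pow_div_fact_le_exp[of "real k" k] by (simp add: divide_le_eq)
  then have "ln (real k ^ k) \<le> ln (exp (real k) * fact k)"
    using False by (subst ln_le_cancel_iff) auto
  then show ?thesis
    using False by (simp add: ln_mult ln_realpow algebra_simps)
qed simp

lemma mult_ln_minus_one_mono: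
  fixes a b :: real
  assumes "1 \<le> a" "a \<le> b"
  shows "a * (ln a - 1) \<le> b * (ln b - 1)"
proof (rule DERIV_nonneg_imp_increasing_open[OF assms(2)])
  fix w assume "a < w" "w < b"
  then show "\<exists>y. ((\<lambda>w. w * (ln w - 1)) has_real_derivative y) (at w) \<and> 0 \<le> y"
    using assms by (intro exI[of _ "ln w"] conjI) (auto intro!: derivative_eq_intros)
next
  show "continuous_on {a..b} (\<lambda>w. w * (ln w - 1))"
    using assms by (intro continuous_intros) auto
qed

lemma Gamma_real_le_exp:
  fixes u :: real
  assumes u: "u \<ge> 3/2"
  shows "Gamma u \<le> exp ((u + 1) * ln (u + 1))"
proof -
  define m where "m = nat \<lceil>u\<rceil>"
  have m: "u \<le> real m" "real m < u + 1" "m \<ge> 2"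
    using u by (auto simp: m_def) linarith+
  have "Gamma u \<le> Gamma (real m)"
    using Gamma_real_strict_mono[OF u, of "real m"] m by (cases "u = real m") auto
  also have "real m = 1 + of_nat (m - 1)"
    using m by simp
  also have "Gamma (1 + of_nat (m - 1) :: real) = fact (m - 1)"
    by (rule Gamma_fact)
  also have "(fact (m - 1) :: real) \<le> real (m - 1) ^ (m - 1)"
    using fact_le_power[of "m - 1"] by (simp only: of_nat_power)
  also have "\<dots> \<le> (u + 1) ^ (m - 1)"
    using m u by (intro power_mono) auto
  also have "\<dots> = (u + 1) powr real (m - 1)"
    using u by (simp add: powr_realpow)
  also have "\<dots> \<le> (u + 1) powr (u + 1)"
    using m u by (intro powr_mono) auto
  also have "\<dots> = exp ((u + 1) * ln (u + 1))"
    using u by (simp add: powr_def mult.commute)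
  finally show ?thesis .
qed

lemma Gamma_real_ge_exp:
  fixes v :: real
  assumes v: "v \<ge> 3"
  shows "exp ((v - 2) * (ln (v - 2) - 1)) \<le> Gamma v"
proof -
  define m where "m = nat \<lfloor>v\<rfloor>"
  have m: "real m \<le> v" "v < real m + 1" "m \<ge> 3"
    using v by (auto simp: m_def) linarith
  have "exp ((v - 2) * (ln (v - 2) - 1)) \<le> exp (real (m - 1) * (ln (real (m - 1)) - 1))"
    using m v by (intro exp_mono mult_ln_minus_one_mono) auto
  also have "\<dots> \<le> fact (m - 1)"
    using ln_fact_ge[of "m - 1"] by (metis exp_le_cancel_iff exp_ln fact_gt_zero)
  also have "(fact (m - 1) :: real) = Gamma (1 + of_nat (m - 1))"
    by (rule Gamma_fact[symmetric])
  also have "1 + of_nat (m - 1) = real m"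
    using m by simp
  also have "Gamma (real m) \<le> Gamma v"
    using Gamma_real_strict_mono[of "real m" v] m by (cases "v = real m") auto
  finally show ?thesis .
qed

lemma norm_Gamma_le_exp:
  fixes z :: complex
  assumes "Re z \<ge> 3/2"
  shows "norm (Gamma z) \<le> exp ((Re z + 1) * ln (Re z + 1))"
  using norm_Gamma_le_Gamma_Re[of z] Gamma_real_le_exp[OF assms] assms by simp

lemma norm_Gamma_ge_exp:
  fixes z :: complex
  assumes "Re z \<ge> 3"
  shows "exp ((Re z - 2) * (ln (Re z - 2) - 1) - (Im z)\<^sup>2 * (1 / (Re z)\<^sup>2 + 1 / Re z) / 2)
           \<le> norm (Gamma z)"
proof -
  have "exp ((Re z - 2) * (ln (Re z - 2) - 1))
          \<le> norm (Gamma z) * exp ((Im z)\<^sup>2 * (1 / (Re z)\<^sup>2 + 1 / Re z) / 2)"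
    using Gamma_real_ge_exp[OF assms] Gamma_Re_le_norm_Gamma[of z] assms by simp
  then show ?thesis
    by (simp add: exp_diff divide_le_eq)
qed

lemma norm_Gamma_ratio_le_exp:
  fixes u v :: complex and R :: real
  assumes "Re u \<ge> 3/2" "Re v \<ge> 3" "R \<ge> 0"
  shows "norm (Gamma u) * R ^ n / (norm (Gamma v) * fact n)
           \<le> exp ((Re u + 1) * ln (Re u + 1) + n * ln (R + 1)
                  - ((Re v - 2) * (ln (Re v - 2) - 1) - (Im v)\<^sup>2 * (1 / (Re v)\<^sup>2 + 1 / Re v) / 2)
                  - n * (ln n - 1))"
proof -
  have "exp (n * (ln n - 1)) \<le> fact n"
    using ln_fact_ge[of n] by (metis exp_le_cancel_iff exp_ln fact_gt_zero)
  moreover have "R ^ n \<le> exp (n * ln (R + 1))"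
    using assms(3) by (simp add: exp_of_nat_mult power_mono)
  ultimately have "norm (Gamma u) * R ^ n / (norm (Gamma v) * fact n)
      \<le> exp ((Re u + 1) * ln (Re u + 1)) * exp (n * ln (R + 1)) /
         (exp ((Re v - 2) * (ln (Re v - 2) - 1) - (Im v)\<^sup>2 * (1 / (Re v)\<^sup>2 + 1 / Re v) / 2) *
          exp (n * (ln n - 1)))"
    using norm_Gamma_le_exp[OF assms(1)] norm_Gamma_ge_exp[OF assms(2)] assms(3)
    by (intro frac_le mult_mono mult_pos_pos) auto
  then show ?thesis
    by (simp add: exp_add exp_diff)
qed

lemma summable_norm_Gamma_ratio:
  fixes \<alpha> \<beta> \<rho> \<kappa> :: complex and R :: real
  assumes "Re \<alpha> > 0" "Re \<kappa> > 0" "Re (\<kappa> - \<alpha>) < 1" "R \<ge> 0"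
  shows "summable (\<lambda>n. norm (Gamma (\<rho> + \<kappa> * of_nat n)) * R ^ n /
                       (norm (Gamma (\<alpha> * of_nat n + \<beta>)) * fact n))"
proof -
  define a where "a = Re \<kappa>"
  define b where "b = Re \<alpha>"
  define p where "p = Re \<rho>"
  define q where "q = Re \<beta>"
  \<comment> \<open>\<open>Y * n\<^sup>2\<close> bounds \<open>(Im (\<alpha> * n + \<beta>))\<^sup>2\<close> without a case distinction on \<open>Im \<alpha> = 0\<close>,
    which \<open>real_asymp\<close> could not make.\<close>
  define Y where "Y = (\<bar>Im \<alpha>\<bar> + \<bar>Im \<beta>\<bar>)\<^sup>2 + 1"
  have "a > 0" "b > 0" "a < b + 1" "Y > 0"
    using assms by (auto simp: a_def b_def Y_def add_nonneg_pos)
  then have "eventually (\<lambda>n::nat. (p + a*n + 1) * ln (p + a*n + 1) + n * ln (R + 1)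
      - ((q + b*n - 2) * (ln (q + b*n - 2) - 1) - Y * n\<^sup>2 * (1 / (q + b*n)\<^sup>2 + 1 / (q + b*n)) / 2)
      - n * (ln n - 1) < - (n * ln 2)) at_top"
    and "eventually (\<lambda>n::nat. p + a*n \<ge> 3/2) at_top"
    and "eventually (\<lambda>n::nat. q + b*n \<ge> 3) at_top"
    and "eventually (\<lambda>n::nat. n \<ge> 1) at_top"
    using assms(4) by real_asymp+
  then have "eventually (\<lambda>n. norm (norm (Gamma (\<rho> + \<kappa> * of_nat n)) * R ^ n /
                       (norm (Gamma (\<alpha> * of_nat n + \<beta>)) * fact n)) \<le> (1/2) ^ n) at_top"
  proof eventually_elim
    case (elim n)
    define v where "v = \<alpha> * of_nat n + \<beta>"
    have Re_v: "Re v = q + b*n"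
      by (simp add: v_def q_def b_def)
    have "\<bar>Im v\<bar> \<le> \<bar>Im \<alpha>\<bar> * n + \<bar>Im \<beta>\<bar> * n"
      using elim(4) abs_triangle_ineq[of "Im \<alpha> * n" "Im \<beta>"] mult_left_mono[of 1 "real n" "\<bar>Im \<beta>\<bar>"]
      by (simp add: v_def abs_mult)
    then have "(Im v)\<^sup>2 \<le> ((\<bar>Im \<alpha>\<bar> + \<bar>Im \<beta>\<bar>) * n)\<^sup>2"
      by (subst power2_abs[symmetric]) (intro power_mono, auto simp: algebra_simps)
    also have "\<dots> \<le> Y * n\<^sup>2"
      unfolding Y_def power_mult_distrib of_nat_power by (intro mult_right_mono) auto
    finally have Im_v: "(Im v)\<^sup>2 \<le> Y * n\<^sup>2" .
    have "norm (Gamma (\<rho> + \<kappa> * of_nat n)) * R ^ n / (norm (Gamma v) * fact n)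
            \<le> exp ((p + a*n + 1) * ln (p + a*n + 1) + n * ln (R + 1)
                 - ((q + b*n - 2) * (ln (q + b*n - 2) - 1) - (Im v)\<^sup>2 * (1 / (Re v)\<^sup>2 + 1 / Re v) / 2)
                 - n * (ln n - 1))"
      using norm_Gamma_ratio_le_exp[of "\<rho> + \<kappa> * of_nat n" v R n] elim(2,3) assms(4)
      by (simp add: Re_v p_def a_def)
    also have "\<dots> \<le> exp (- (n * ln 2))"
      using elim(1,3) Im_v unfolding Re_v
      by (intro exp_mono order.trans[OF _ less_imp_le[OF elim(1)]] diff_right_mono diff_left_mono
            add_left_mono divide_right_mono mult_right_mono) auto
    also have "\<dots> = (1/2) ^ n"
      by (simp add: exp_minus exp_of_nat_mult power_one_over inverse_eq_divide)
    finally show ?case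
      using assms(4) by (simp add: v_def)
  qed
  then show ?thesis
    by (rule summable_comparison_test_ev) (simp add: summable_geometric)
qed

definition ML4_coeff :: "complex \<Rightarrow> complex \<Rightarrow> complex \<Rightarrow> complex \<Rightarrow> nat \<Rightarrow> complex" where
  "ML4_coeff \<alpha> \<beta> \<rho> \<kappa> n =
     Gamma (\<rho> + \<kappa> * of_nat n) / (Gamma \<rho> * Gamma (\<alpha> * of_nat n + \<beta>) * fact n)"

lemma summable_norm_ML4_coeff:
  assumes "Re \<alpha> > 0" "Re \<kappa> > 0" "Re (\<kappa> - \<alpha>) < 1" "R \<ge> 0"
  shows "summable (\<lambda>n. norm (ML4_coeff \<alpha> \<beta> \<rho> \<kappa> n) * R ^ n)"
  using summable_divide[OF summable_norm_Gamma_ratio[OF assms, of \<rho> \<beta>], of "norm (Gamma \<rho>)"]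
  by (simp add: ML4_coeff_def norm_divide norm_mult mult_ac)

lemma ML4_sums:
  assumes "Re \<alpha> > 0" "Re \<kappa> > 0" "Re (\<kappa> - \<alpha>) < 1"
  shows "(\<lambda>n. ML4_coeff \<alpha> \<beta> \<rho> \<kappa> n * z ^ n) sums ML4 \<alpha> \<beta> \<rho> \<kappa> z"
proof -
  have "summable (\<lambda>n. norm (ML4_coeff \<alpha> \<beta> \<rho> \<kappa> n * z ^ n))"
    using summable_norm_ML4_coeff[OF assms, of "norm z" \<beta> \<rho>] by (simp add: norm_mult norm_power)
  then show ?thesis
    unfolding ML4_def ML4_coeff_def by (simp add: summable_norm_cancel summable_sums mult_ac)
qed

lemma cpow_of_real_pos: "s > 0 \<Longrightarrow> complex_of_real s powr z = exp (z * of_real (ln s))"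
  by (simp add: powr_def Ln_of_real)

lemma prab_kernel_sums:
  assumes "Re \<alpha> > 0" "Re \<kappa> > 0" "Re (\<kappa> - \<alpha>) < 1" and s: "s > 0"
  shows "(\<lambda>n. ML4_coeff \<alpha> \<beta> \<rho> \<kappa> n * \<omega> ^ n * of_real s powr (\<alpha> * of_nat n + \<beta> - 1))
           sums prab_kernel \<alpha> \<beta> \<omega> \<rho> \<kappa> s"
proof -
  have term_eq: "of_real s powr (\<beta> - 1) * (ML4_coeff \<alpha> \<beta> \<rho> \<kappa> n * (\<omega> * of_real s powr \<alpha>) ^ n)
          = ML4_coeff \<alpha> \<beta> \<rho> \<kappa> n * \<omega> ^ n * of_real s powr (\<alpha> * of_nat n + \<beta> - 1)" for n
    using s by (simp add: cpow_of_real_pos power_mult_distrib exp_of_nat_mult[symmetric]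
                          exp_add[symmetric] algebra_simps)
  have "(\<lambda>n. of_real s powr (\<beta> - 1) * (ML4_coeff \<alpha> \<beta> \<rho> \<kappa> n * (\<omega> * of_real s powr \<alpha>) ^ n))
          sums (of_real s powr (\<beta> - 1) * ML4 \<alpha> \<beta> \<rho> \<kappa> (\<omega> * of_real s powr \<alpha>))"
    by (intro sums_mult ML4_sums assms)
  then show ?thesis
    unfolding prab_kernel_def term_eq .
qed

section \<open>Fractional integrals of integrable functions\<close>

lemma nn_integral_powr_shifted_le:
  fixes s D t :: real
  assumes "s > 0" "D \<ge> 0"
  shows "(\<integral>\<^sup>+x. ennreal (indicator {t<..<t + D} x * (x - t) powr (s - 1)) \<partial>lborel)
           \<le> ennreal (D powr s / s)"
proof -
  have "(\<integral>\<^sup>+x. ennreal (indicator {t<..<t + D} x * (x - t) powr (s - 1)) \<partial>lborel)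
          \<le> (\<integral>\<^sup>+x. ennreal (indicator {0..D} (x - t) * (x - t) powr (s - 1)) \<partial>lborel)"
    by (intro nn_integral_mono) (auto simp: indicator_def)
  also have "\<dots> = (\<integral>\<^sup>+y. ennreal (indicator {0..D} y * y powr (s - 1)) \<partial>lborel)"
    using nn_integral_real_affine[where c = 1 and t = t and
        f = "\<lambda>x. ennreal (indicator {0..D} (x - t) * (x - t) powr (s - 1))"]
    by simp
  also have "\<dots> = ennreal (D powr (s - 1 + 1) / (s - 1 + 1))"
    using assms by (intro nn_integral_has_integral_lebesgue has_integral_powr_from_0) auto
  finally show ?thesis
    by simp
qed

lemma AE_nn_integral_RL_kernel_finite:
  fixes \<psi> :: "real \<Rightarrow> ennreal"
  assumes [measurable]: "\<psi> \<in> borel_measurable borel"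
    and fin: "(\<integral>\<^sup>+t. \<psi> t \<partial>lborel) < \<infinity>" and s: "s > 0" and "c < d"
  shows "AE x in lborel. x < d \<longrightarrow>
           (\<integral>\<^sup>+t. ennreal (indicator {c<..<x} t * (x - t) powr (s - 1)) * \<psi> t \<partial>lborel) < \<infinity>"
proof -
  define G where "G x t = ennreal (if c < t \<and> t < x \<and> x < d then (x - t) powr (s - 1) else 0) * \<psi> t"
    for x t
  have Gm: "(\<lambda>(x, t). G x t) \<in> borel_measurable (lborel \<Otimes>\<^sub>M lborel)"
    unfolding G_def by measurable
  have "(\<integral>\<^sup>+x. (\<integral>\<^sup>+t. G x t \<partial>lborel) \<partial>lborel) = (\<integral>\<^sup>+t. (\<integral>\<^sup>+x. G x t \<partial>lborel) \<partial>lborel)"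
    using lborel_pair.Fubini'[OF Gm] by simp
  also have "\<dots> \<le> (\<integral>\<^sup>+t. ennreal ((d - c) powr s / s) * \<psi> t \<partial>lborel)"
  proof (intro nn_integral_mono)
    fix t :: real
    have "(\<integral>\<^sup>+x. ennreal (if c < t \<and> t < x \<and> x < d then (x - t) powr (s - 1) else 0) \<partial>lborel)
            \<le> ennreal ((d - c) powr s / s)"
    proof (cases "c < t")
      case True
      then have "(\<integral>\<^sup>+x. ennreal (if c < t \<and> t < x \<and> x < d then (x - t) powr (s - 1) else 0) \<partial>lborel)
                   \<le> (\<integral>\<^sup>+x. ennreal (indicator {t<..<t + (d - c)} x * (x - t) powr (s - 1)) \<partial>lborel)"
        by (intro nn_integral_mono) (auto simp: indicator_def)
      also have "\<dots> \<le> ennreal ((d - c) powr s / s)"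
        using s \<open>c < d\<close> by (intro nn_integral_powr_shifted_le) auto
      finally show ?thesis .
    qed simp
    then show "(\<integral>\<^sup>+x. G x t \<partial>lborel) \<le> ennreal ((d - c) powr s / s) * \<psi> t"
      unfolding G_def by (subst nn_integral_multc) (auto intro: mult_right_mono)
  qed
  also have "\<dots> = ennreal ((d - c) powr s / s) * (\<integral>\<^sup>+t. \<psi> t \<partial>lborel)"
    by (rule nn_integral_cmult) simp
  also have "\<dots> < \<infinity>"
    using fin by (simp add: ennreal_mult_less_top)
  finally have "AE x in lborel. (\<integral>\<^sup>+t. G x t \<partial>lborel) \<noteq> \<infinity>"
    by (intro nn_integral_PInf_AE) (use Gm in \<open>auto intro: lborel.borel_measurable_nn_integral\<close>)
  then show ?thesis
  proof eventually_elim
    case (elim x)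
    have "x < d \<Longrightarrow> ennreal (indicator {c<..<x} t * (x - t) powr (s - 1)) * \<psi> t = G x t" for t
      by (auto simp: G_def indicator_def)
    then show ?case
      using elim by (simp add: less_top)
  qed
qed

lemma AE_set_integrable_RL_kernel:
  fixes f :: "real \<Rightarrow> 'a::{banach, second_countable_topology}"
  assumes "s > 0" "c < d" and f: "set_integrable lebesgue {c<..<d} f"
  shows "AE x in lebesgue. x \<in> {c<..<d} \<longrightarrow>
           set_integrable lebesgue {c<..<x} (\<lambda>t. (x - t) powr (s - 1) * norm (f t))"
proof -
  define f0 where "f0 t = indicator {c<..<d} t *\<^sub>R f t" for t
  have f0m[measurable]: "f0 \<in> borel_measurable lebesgue"
    using f unfolding set_integrable_def f0_def by (rule borel_measurable_integrable)
  \<comment> \<open>Tonelli is applied on \<open>lborel\<close>, which needs a Borel representative of \<open>norm f0\<close>.\<close>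
  obtain \<psi> where \<psi>m: "\<psi> \<in> borel_measurable lborel" and \<psi>ae: "AE t in lborel. ennreal (norm (f0 t)) = \<psi> t"
    using completion_ex_borel_measurable[of "\<lambda>t. ennreal (norm (f0 t))" lborel] by auto
  have "(\<integral>\<^sup>+t. \<psi> t \<partial>lborel) = (\<integral>\<^sup>+t. ennreal (norm (f0 t)) \<partial>lebesgue)"
    using \<psi>ae by (subst nn_integral_completion) (intro nn_integral_cong_AE, auto)
  also have "\<dots> < \<infinity>"
    using f unfolding set_integrable_def integrable_iff_bounded f0_def by blast
  finally have "AE x in lborel. x < d \<longrightarrow>
      (\<integral>\<^sup>+t. ennreal (indicator {c<..<x} t * (x - t) powr (s - 1)) * \<psi> t \<partial>lborel) < \<infinity>"
    using \<psi>m assms by (intro AE_nn_integral_RL_kernel_finite) auto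
  then show ?thesis
  proof (rule AE_completion[THEN eventually_mono], intro impI)
    fix x assume fin: "x < d \<longrightarrow> (\<integral>\<^sup>+t. ennreal (indicator {c<..<x} t * (x - t) powr (s - 1)) * \<psi> t \<partial>lborel) < \<infinity>"
      and x: "x \<in> {c<..<d}"
    have eq: "indicator {c<..<x} t *\<^sub>R ((x - t) powr (s - 1) * norm (f t))
                = indicator {c<..<x} t * (x - t) powr (s - 1) * norm (f0 t)" for t
      using x by (auto simp: f0_def indicator_def)
    have "(\<integral>\<^sup>+t. ennreal (indicator {c<..<x} t * (x - t) powr (s - 1) * norm (f0 t)) \<partial>lebesgue)
            = (\<integral>\<^sup>+t. ennreal (indicator {c<..<x} t * (x - t) powr (s - 1)) * \<psi> t \<partial>lborel)"
      using \<psi>ae by (subst nn_integral_completion) (intro nn_integral_cong_AE, auto simp: ennreal_mult)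
    also have "\<dots> < \<infinity>"
      using fin x by simp
    finally have "(\<integral>\<^sup>+t. ennreal (indicator {c<..<x} t * (x - t) powr (s - 1) * norm (f0 t)) \<partial>lebesgue) < \<infinity>" .
    moreover have "(\<lambda>t. indicator {c<..<x} t * (x - t) powr (s - 1)) \<in> borel_measurable lebesgue"
      by (rule measurable_completion) simp
    ultimately show "set_integrable lebesgue {c<..<x} (\<lambda>t. (x - t) powr (s - 1) * norm (f t))"
      unfolding set_integrable_def eq integrable_iff_bounded by simp
  qed
qed

section \<open>Termwise integration\<close>

lemma powr_mult_of_nat_add:
  fixes L a b :: real
  assumes "L > 0"
  shows "L powr (a * n + b) = (L powr a) ^ n * L powr b"
  using assms by (simp add: powr_add powr_powr[symmetric] powr_realpow)

lemma Prabhakar_term_eq: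
  "Gamma (\<rho> + \<kappa> * of_nat n) * \<omega> ^ n / (Gamma \<rho> * fact n) * RL_int c (\<alpha> * of_nat n + \<beta>) f x
     = ML4_coeff \<alpha> \<beta> \<rho> \<kappa> n * \<omega> ^ n *
       (LINT t:{c<..<x}|lebesgue. of_real (x - t) powr (\<alpha> * of_nat n + \<beta> - 1) * f t)"
  by (simp add: RL_int_def ML4_coeff_def)

lemma set_borel_measurable_cpow_kernel_mult:
  fixes f :: "real \<Rightarrow> complex"
  assumes "set_borel_measurable lebesgue {c<..<x} f"
  shows "set_borel_measurable lebesgue {c<..<x} (\<lambda>t. of_real (x - t) powr \<gamma> * f t)"
proof -
  have exp_measurable: "(\<lambda>t. exp (\<gamma> * of_real (ln (x - t)))) \<in> borel_measurable lebesgue"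
    by (rule measurable_completion) measurable
  have eq: "indicator {c<..<x} t *\<^sub>R (of_real (x - t) powr \<gamma> * f t)
                   = exp (\<gamma> * of_real (ln (x - t))) * (indicator {c<..<x} t *\<^sub>R f t)" for t
    by (cases "t \<in> {c<..<x}") (simp_all add: cpow_of_real_pos del: of_real_diff)
  show ?thesis
    unfolding set_borel_measurable_def eq
    by (rule borel_measurable_times[OF exp_measurable assms[unfolded set_borel_measurable_def]])
qed

lemma norm_RL_integral_le:
  fixes f :: "real \<Rightarrow> complex"
  assumes x: "x \<in> {c<..<d}" and "1 \<le> Re \<gamma>" and f: "set_integrable lebesgue {c<..<d} f"
  shows "norm (LINT t:{c<..<x}|lebesgue. of_real (x - t) powr (\<gamma> - 1) * f t)
           \<le> (d - c) powr (Re \<gamma> - 1) * (LINT t:{c<..<d}|lebesgue. norm (f t))"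
proof -
  define g where "g t = indicator {c<..<x} t *\<^sub>R (of_real (x - t) powr (\<gamma> - 1) * f t)" for t
  define h where "h t = (d - c) powr (Re \<gamma> - 1) * (indicator {c<..<d} t *\<^sub>R norm (f t))" for t
  have h: "integrable lebesgue h"
    using set_integrable_norm[OF f] unfolding set_integrable_def h_def by (rule integrable_mult_right)
  have g_le: "norm (g t) \<le> h t" for t
  proof (cases "t \<in> {c<..<x}")
    case True
    then have "norm (g t) = (x - t) powr (Re \<gamma> - 1) * norm (f t)"
      by (simp add: g_def norm_mult norm_powr_real_powr)
    also have "\<dots> \<le> h t"
      using True x assms(2) by (auto simp: h_def intro!: mult_right_mono powr_mono2)
    finally show ?thesis .
  qed (simp add: g_def h_def)
  have "norm (LINT t|lebesgue. g t) \<le> (LINT t|lebesgue. h t)"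
  proof (cases "integrable lebesgue g")
    case True
    then show ?thesis
      using h g_le by (intro Bochner_Integration.integral_norm_bound_integral)
  next
    case False
    then show ?thesis
      by (auto simp: not_integrable_integral_eq intro!: Bochner_Integration.integral_nonneg order_trans[OF norm_ge_zero g_le])
  qed
  then show ?thesis
    by (simp add: g_def h_def set_lebesgue_integral_def)
qed

lemma Prabhakar_series_uniformly_convergent:
  fixes f :: "real \<Rightarrow> complex"
  assumes "Re \<alpha> > 0" "Re \<kappa> > 0" "Re (\<kappa> - \<alpha>) < 1" "c < d"
    and f: "set_integrable lebesgue {c<..<d} f"
  shows "uniformly_convergent_on {c<..<d} (\<lambda>N x. \<Sum>n<N.
           Gamma (\<rho> + \<kappa> * of_nat n) * \<omega> ^ n / (Gamma \<rho> * fact n) * RL_int c (\<alpha> * of_nat n + \<beta>) f x)"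
proof (rule Weierstrass_m_test'_ev)
  define M where "M = (d - c) powr Re \<alpha>"
  define B where "B = (d - c) powr (Re \<beta> - 1) * (LINT t:{c<..<d}|lebesgue. norm (f t))"
  show "summable (\<lambda>n. norm (ML4_coeff \<alpha> \<beta> \<rho> \<kappa> n) * (norm \<omega> * M) ^ n * B)"
    by (intro summable_mult2 summable_norm_ML4_coeff assms) (simp add: M_def)
  have "eventually (\<lambda>n::nat. 1 \<le> Re \<alpha> * n + Re \<beta>) at_top"
    using assms(1) by real_asymp
  then show "\<forall>\<^sub>F n in sequentially. \<forall>x\<in>{c<..<d}.
      norm (Gamma (\<rho> + \<kappa> * of_nat n) * \<omega> ^ n / (Gamma \<rho> * fact n) * RL_int c (\<alpha> * of_nat n + \<beta>) f x)
        \<le> norm (ML4_coeff \<alpha> \<beta> \<rho> \<kappa> n) * (norm \<omega> * M) ^ n * B"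
  proof eventually_elim
    case (elim n)
    have "norm (Gamma (\<rho> + \<kappa> * of_nat n) * \<omega> ^ n / (Gamma \<rho> * fact n) * RL_int c (\<alpha> * of_nat n + \<beta>) f x)
            \<le> norm (ML4_coeff \<alpha> \<beta> \<rho> \<kappa> n) * (norm \<omega> * M) ^ n * B" if "x \<in> {c<..<d}" for x
    proof -
      have "norm (LINT t:{c<..<x}|lebesgue. of_real (x - t) powr (\<alpha> * of_nat n + \<beta> - 1) * f t)
              \<le> (d - c) powr (Re \<alpha> * n + Re \<beta> - 1) * (LINT t:{c<..<d}|lebesgue. norm (f t))"
        using norm_RL_integral_le[OF that _ f, of "\<alpha> * of_nat n + \<beta>"] elim by simp
      also have "\<dots> = M ^ n * B"
        using assms(4) powr_mult_of_nat_add[of "d - c" "Re \<alpha>" n "Re \<beta> - 1"]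
        by (simp add: M_def B_def add_diff_eq)
      finally have "norm (LINT t:{c<..<x}|lebesgue. of_real (x - t) powr (\<alpha> * of_nat n + \<beta> - 1) * f t)
                      \<le> M ^ n * B" .
      then have "norm (ML4_coeff \<alpha> \<beta> \<rho> \<kappa> n) * norm \<omega> ^ n *
                   norm (LINT t:{c<..<x}|lebesgue. of_real (x - t) powr (\<alpha> * of_nat n + \<beta> - 1) * f t)
                   \<le> norm (ML4_coeff \<alpha> \<beta> \<rho> \<kappa> n) * norm \<omega> ^ n * (M ^ n * B)"
        by (rule mult_left_mono) simp
      then show ?thesis
        unfolding Prabhakar_term_eq by (simp add: norm_mult norm_power power_mult_distrib mult_ac)
    qed
    then show ?case
      by blast
  qed
qed

lemma Prabhakar_series_sums:
  fixes f :: "real \<Rightarrow> complex"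
  assumes "Re \<alpha> > 0" "Re \<kappa> > 0" "Re (\<kappa> - \<alpha>) < 1" "c < x"
    and f: "set_borel_measurable lebesgue {c<..<x} f"
    and H: "set_integrable lebesgue {c<..<x} (\<lambda>t. (x - t) powr (Re \<beta> - 1) * norm (f t))"
  shows "set_integrable lebesgue {c<..<x} (\<lambda>t. prab_kernel \<alpha> \<beta> \<omega> \<rho> \<kappa> (x - t) * f t)"
    and "(\<lambda>n. Gamma (\<rho> + \<kappa> * of_nat n) * \<omega> ^ n / (Gamma \<rho> * fact n) * RL_int c (\<alpha> * of_nat n + \<beta>) f x)
           sums prab_int \<alpha> \<beta> \<omega> \<rho> \<kappa> c f x"
proof -
  define C where "C n = ML4_coeff \<alpha> \<beta> \<rho> \<kappa> n * \<omega> ^ n" for n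
  define M where "M = (x - c) powr Re \<alpha>"
  define h where "h t = indicator {c<..<x} t *\<^sub>R ((x - t) powr (Re \<beta> - 1) * norm (f t))" for t
  define F where "F n t = C n * (indicator {c<..<x} t *\<^sub>R (of_real (x - t) powr (\<alpha> * of_nat n + \<beta> - 1) * f t))"
    for n t
  have h: "integrable lebesgue h"
    using H unfolding set_integrable_def h_def .
  have summable_CM: "summable (\<lambda>n. norm (C n) * M ^ n)"
    using summable_norm_ML4_coeff[OF assms(1-3), of "norm \<omega> * M" \<beta> \<rho>]
    by (simp add: C_def M_def norm_mult norm_power power_mult_distrib mult_ac)
  have F_le: "norm (F n t) \<le> norm (C n) * M ^ n * h t" for n t
  proof (cases "t \<in> {c<..<x}")
    case True
    then have "norm (F n t) = norm (C n) * ((x - t) powr Re \<alpha>) ^ n * ((x - t) powr (Re \<beta> - 1) * norm (f t))"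
      using powr_mult_of_nat_add[of "x - t" "Re \<alpha>" n "Re \<beta> - 1"]
      by (simp add: F_def norm_mult norm_powr_real_powr add_diff_eq)
    also have "\<dots> \<le> norm (C n) * M ^ n * h t"
      using True assms(1) by (auto simp: M_def h_def intro!: mult_left_mono mult_right_mono power_mono powr_mono2)
    finally show ?thesis .
  qed (simp add: F_def h_def)
  have F_integrable: "integrable lebesgue (F n)" for n
  proof (rule Bochner_Integration.integrable_bound)
    show "integrable lebesgue (\<lambda>t. norm (C n) * M ^ n * h t)"
      using h by (rule integrable_mult_right)
    show "F n \<in> borel_measurable lebesgue"
      using set_borel_measurable_cpow_kernel_mult[OF f, of "\<alpha> * of_nat n + \<beta> - 1"]
      unfolding F_def set_borel_measurable_def by (rule borel_measurable_times[OF borel_measurable_const])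
    show "AE t in lebesgue. norm (F n t) \<le> norm (norm (C n) * M ^ n * h t)"
      by (intro AE_I2) (metis F_le real_norm_def abs_ge_self order_trans)
  qed
  have "summable (\<lambda>n. LINT t|lebesgue. norm (F n t))"
  proof (rule summable_comparison_test[OF _ summable_mult2[OF summable_CM, of "LINT t|lebesgue. h t"]])
    have "(LINT t|lebesgue. norm (F n t)) \<le> (LINT t|lebesgue. norm (C n) * M ^ n * h t)" for n
      using F_le F_integrable h by (intro integral_mono integrable_norm integrable_mult_right)
    then show "\<exists>N. \<forall>n\<ge>N. norm (LINT t|lebesgue. norm (F n t)) \<le> norm (C n) * M ^ n * (LINT t|lebesgue. h t)"
      by simp
  qed
  moreover have "AE t in lebesgue. summable (\<lambda>n. norm (F n t))"
    using F_le by (intro AE_I2 summable_comparison_test[OF _ summable_mult2[OF summable_CM]]) auto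
  moreover have F_sums: "(\<lambda>n. F n t) sums (indicator {c<..<x} t *\<^sub>R (prab_kernel \<alpha> \<beta> \<omega> \<rho> \<kappa> (x - t) * f t))" for t
  proof (cases "t \<in> {c<..<x}")
    case True
    then show ?thesis
      using sums_mult2[OF prab_kernel_sums[OF assms(1-3), of "x - t" \<beta> \<rho> \<omega>], of "f t"]
      by (simp add: F_def C_def mult.assoc)
  qed (simp add: F_def)
  ultimately have "integrable lebesgue (\<lambda>t. \<Sum>n. F n t)"
    and "(\<lambda>n. (LINT t|lebesgue. F n t)) sums (LINT t|lebesgue. (\<Sum>n. F n t))"
    using F_integrable by (blast intro: integrable_suminf sums_integral)+
  moreover have "(LINT t|lebesgue. F n t) =
      Gamma (\<rho> + \<kappa> * of_nat n) * \<omega> ^ n / (Gamma \<rho> * fact n) * RL_int c (\<alpha> * of_nat n + \<beta>) f x" for n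
    unfolding Prabhakar_term_eq F_def C_def set_lebesgue_integral_def by (rule integral_mult_right_zero)
  ultimately show "set_integrable lebesgue {c<..<x} (\<lambda>t. prab_kernel \<alpha> \<beta> \<omega> \<rho> \<kappa> (x - t) * f t)"
    and "(\<lambda>n. Gamma (\<rho> + \<kappa> * of_nat n) * \<omega> ^ n / (Gamma \<rho> * fact n) * RL_int c (\<alpha> * of_nat n + \<beta>) f x)
           sums prab_int \<alpha> \<beta> \<omega> \<rho> \<kappa> c f x"
    unfolding set_integrable_def prab_int_def set_lebesgue_integral_def sums_unique[OF F_sums]
    by simp_all
qed

theorem theorem2p1:
  fixes \<alpha> \<beta> \<omega> \<rho> \<kappa> :: complex and c d :: real and f :: "real \<Rightarrow> complex"
  assumes "Re \<alpha> > 0" and "Re \<beta> > 0" and "Re \<kappa> > 0" and "Re (\<kappa> - \<alpha>) < 1"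
    and "c < d"
    and "set_integrable lebesgue {c<..<d} f"
  shows "(AE x in lebesgue. x \<in> {c<..<d} \<longrightarrow>
           set_integrable lebesgue {c<..<x} (\<lambda>t. prab_kernel \<alpha> \<beta> \<omega> \<rho> \<kappa> (x - t) * f t) \<and>
           (\<lambda>n. Gamma (\<rho> + \<kappa> * of_nat n) * \<omega> ^ n / (Gamma \<rho> * fact n)
                  * RL_int c (\<alpha> * of_nat n + \<beta>) f x)
             sums prab_int \<alpha> \<beta> \<omega> \<rho> \<kappa> c f x) \<and>
         (\<forall>K. compact K \<and> K \<subseteq> {c<..<d} \<longrightarrow>
           uniformly_Cauchy_on K (\<lambda>N x. \<Sum>n<N. Gamma (\<rho> + \<kappa> * of_nat n) * \<omega> ^ n / (Gamma \<rho> * fact n)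
                  * RL_int c (\<alpha> * of_nat n + \<beta>) f x))"
proof -
  have "AE x in lebesgue. x \<in> {c<..<d} \<longrightarrow>
          set_integrable lebesgue {c<..<x} (\<lambda>t. (x - t) powr (Re \<beta> - 1) * norm (f t))"
    using assms(2,5,6) by (intro AE_set_integrable_RL_kernel) auto
  moreover have "set_borel_measurable lebesgue {c<..<x} f" if "x \<in> {c<..<d}" for x
  proof -
    have "set_integrable lebesgue {c<..<x} f"
      using that by (intro set_integrable_subset[OF assms(6)]) auto
    then show ?thesis
      unfolding set_integrable_def set_borel_measurable_def by (rule borel_measurable_integrable)
  qed
  moreover note Prabhakar_series_uniformly_convergent[OF assms(1,3,4,5,6), of \<rho> \<omega> \<beta>]
  ultimately show ?thesis
    using Prabhakar_series_sums[OF assms(1,3,4)]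
    by (auto elim!: eventually_mono intro: uniformly_convergent_Cauchy uniformly_convergent_on_subset)
qed

end
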